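(* Let $N\in\mathbb{N}$ and let $\mathbf{Y}$ be an $N$-sgrm over $\mathbb{R}^d$ on $[0,T]$. Then there exists exactly one sgrm $\mathbf{X}$ which is an extension of $\mathbf{Y}$ and is minimal in the sense that $\dot{\mathbf{X}}_{s,s}\in\mathcal{L}^N(\mathbb{R}^d)\subset\mathcal{L}((\mathbb{R}^d))$ for all $s\in[0,T]$. This $\mathbf{X}$ satisfies $\dot{\mathbf{X}}_{s,s}=\dot{\mathbf{Y}}_{s,s}$ for all $s$. Moreover, for every interval $[s,t]\subset[0,T]$, $\mathbf{X}_{s,t}$ depends only on $\{\mathbf{Y}|_{[u,v]}: s\le u\le v\le t\}$.
   Context: Fix $T>0$, $d\ge1$. $T((\mathbb{R}^d))$ is the algebra of formal tensor series $\mathbf{x}=\sum_w\mathbf{x}^we_w$ over words $w$ in letters $\{1,\dots,d\}$ (including the empty word $\mathbf{1}$) with concatenation product $\otimes$; $\langle\mathbf{x},w\rangle:=\mathbf{x}^w$. $T^N(\mathbb{R}^d)$ is the span of words of length $\le N$, viewed as the quotient of $T((\mathbb{R}^d))$ by series supported on words of length $>N$, with induced product $\otimes_N$ and projection $\mathrm{proj}_N$. Shuffle product: bilinear, $\mathbf{1}$ is the unit, $wi\sqcup\!\sqcup vj=(w\sqcup\!\sqcup vj)i+(wi\sqcup\!\sqcup v)j$. $\mathcal{L}(\mathbb{R}^d)$: Lie polynomials (Lie algebra generated by $e_1,\dots,e_d$ under the commutator of $\otimes$); $\mathcal{L}^N(\mathbb{R}^d)=\mathrm{proj}_N\mathcal{L}(\mathbb{R}^d)$,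 viewed inside $T((\mathbb{R}^d))$ as polynomials of degree $\le N$; $\mathcal{L}((\mathbb{R}^d))$: Lie series. An $N$-sgrm is a non-zero map $\mathbf{X}:[0,T]^2\to T^N(\mathbb{R}^d)$ with (i) $\langle\mathbf{X}_{s,t},v\sqcup\!\sqcup w\rangle=\langle\mathbf{X}_{s,t},v\rangle\langle\mathbf{X}_{s,t},w\rangle$ for all $s,t$ and words with $|v|+|w|\le N$; (ii) $\mathbf{X}_{s,u}\otimes_N\mathbf{X}_{u,t}=\mathbf{X}_{s,t}$; (iii) $t\mapsto\langle\mathbf{X}_{s,t},w\rangle$ smooth for each $|w|\le N$ and each $s$. An sgrm is a non-zero map $[0,T]^2\to T((\mathbb{R}^d))$ satisfying (i)–(iii) for all words, with $\otimes$. The diagonal derivative is $\dot{\mathbf{X}}_{s,s}:=\partial_t|_{t=s}\mathbf{X}_{s,t}$ (coordinatewise). An sgrm $\mathbf{X}$ is an extension of an $N$-sgrm $\mathbf{Y}$ if $\langle\mathbf{X}_{s,t},w\rangle=\langle\mathbf{Y}_{s,t},w\rangle$ for all $s,t$ and all words with $|w|\le N$. *)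

theory Defs
  imports "HOL-Analysis.Analysis"
begin

(* Letters: elements of a finite type 'a (d = CARD('a) >= 1).
   Words: 'a list.  Tensor series: coefficient functions 'a list => real. *)

type_synonym 'a series = "'a list \<Rightarrow> real"

definition unit_word :: "'a \<Rightarrow> 'a series" where
  "unit_word i = (\<lambda>u. if u = [i] then 1 else 0)"

definition conc :: "'a series \<Rightarrow> 'a series \<Rightarrow> 'a series" where
  "conc x y = (\<lambda>w. \<Sum>k\<le>length w. x (take k w) * y (drop k w))"

(* truncation proj_N; an element of T^N(R^d) is represented by a series
   supported on words of length <= N *)
definition proj :: "nat \<Rightarrow> 'a series \<Rightarrow> 'a series" where
  "proj N x = (\<lambda>w. if length w \<le> N then x w else 0)"

definition concN :: "nat \<Rightarrow> 'a series \<Rightarrow> 'a series \<Rightarrow> 'a series" where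
  "concN N x y = proj N (conc x y)"

(* shuffle recursion on reversed words: shr (rev w) (rev v) (rev u) is the
   coefficient of u in w shuffle v, following
   wi sh vj = (w sh vj)i + (wi sh v)j, unit = empty word *)
fun shr :: "'a list \<Rightarrow> 'a list \<Rightarrow> 'a list \<Rightarrow> real" where
  "shr [] v u = (if u = v then 1 else 0)"
| "shr (i # w) [] u = (if u = i # w then 1 else 0)"
| "shr (i # w) (j # v) [] = 0"
| "shr (i # w) (j # v) (k # u) =
     (if k = i then shr w (j # v) u else 0) + (if k = j then shr (i # w) v u else 0)"

definition shuffle :: "'a list \<Rightarrow> 'a list \<Rightarrow> 'a series" where
  "shuffle v w = (\<lambda>u. shr (rev v) (rev w) (rev u))"

(* <x, v sh w>; v sh w is supported on words of length |v|+|w| *)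
definition pair_shuffle :: "('a::finite) series \<Rightarrow> 'a list \<Rightarrow> 'a list \<Rightarrow> real" where
  "pair_shuffle x v w =
     (\<Sum>u\<in>{u. length u = length v + length w}. shuffle v w u * x u)"

inductive_set lie_poly :: "'a series set" where
  gen: "unit_word i \<in> lie_poly"
| add: "x \<in> lie_poly \<Longrightarrow> y \<in> lie_poly \<Longrightarrow> (\<lambda>w. x w + y w) \<in> lie_poly"
| smult: "x \<in> lie_poly \<Longrightarrow> (\<lambda>w. c * x w) \<in> lie_poly"
| bracket: "x \<in> lie_poly \<Longrightarrow> y \<in> lie_poly \<Longrightarrow>
            (\<lambda>w. conc x y w - conc y x w) \<in> lie_poly"

definition lieN :: "nat \<Rightarrow> 'a series set" where
  "lieN N = proj N ` lie_poly"

definition smooth_on :: "real set \<Rightarrow> (real \<Rightarrow> real) \<Rightarrow> bool" where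
  "smooth_on S g \<longleftrightarrow> (\<exists>f. (\<forall>x\<in>S. f 0 x = g x) \<and>
      (\<forall>k. \<forall>x\<in>S. (f k has_real_derivative f (Suc k) x) (at x within S)))"

definition nsgrm :: "real \<Rightarrow> nat \<Rightarrow> (real \<Rightarrow> real \<Rightarrow> ('a::finite) series) \<Rightarrow> bool" where
  "nsgrm T N Y \<longleftrightarrow>
     (\<forall>s\<in>{0..T}. \<forall>t\<in>{0..T}. \<forall>w. length w > N \<longrightarrow> Y s t w = 0) \<and>
     (\<exists>s\<in>{0..T}. \<exists>t\<in>{0..T}. \<exists>w. Y s t w \<noteq> 0) \<and>
     (\<forall>s\<in>{0..T}. \<forall>t\<in>{0..T}. \<forall>v w. length v + length w \<le> N \<longrightarrow>
        pair_shuffle (Y s t) v w = Y s t v * Y s t w) \<and>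
     (\<forall>s\<in>{0..T}. \<forall>u\<in>{0..T}. \<forall>t\<in>{0..T}. concN N (Y s u) (Y u t) = Y s t) \<and>
     (\<forall>s\<in>{0..T}. \<forall>w. length w \<le> N \<longrightarrow> smooth_on {0..T} (\<lambda>t. Y s t w))"

definition sgrm :: "real \<Rightarrow> (real \<Rightarrow> real \<Rightarrow> ('a::finite) series) \<Rightarrow> bool" where
  "sgrm T X \<longleftrightarrow>
     (\<exists>s\<in>{0..T}. \<exists>t\<in>{0..T}. \<exists>w. X s t w \<noteq> 0) \<and>
     (\<forall>s\<in>{0..T}. \<forall>t\<in>{0..T}. \<forall>v w.
        pair_shuffle (X s t) v w = X s t v * X s t w) \<and>
     (\<forall>s\<in>{0..T}. \<forall>u\<in>{0..T}. \<forall>t\<in>{0..T}. conc (X s u) (X u t) = X s t) \<and>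
     (\<forall>s\<in>{0..T}. \<forall>w. smooth_on {0..T} (\<lambda>t. X s t w))"

definition diag_deriv :: "real \<Rightarrow> (real \<Rightarrow> real \<Rightarrow> 'a series) \<Rightarrow> real \<Rightarrow> 'a series" where
  "diag_deriv T X s = (\<lambda>w. vector_derivative (\<lambda>t. X s t w) (at s within {0..T}))"

definition extension :: "real \<Rightarrow> nat \<Rightarrow> (real \<Rightarrow> real \<Rightarrow> 'a series) \<Rightarrow> (real \<Rightarrow> real \<Rightarrow> 'a series) \<Rightarrow> bool" where
  "extension T N X Y \<longleftrightarrow>
     (\<forall>s\<in>{0..T}. \<forall>t\<in>{0..T}. \<forall>w. length w \<le> N \<longrightarrow> X s t w = Y s t w)"

definition minimal_extension :: "real \<Rightarrow> nat \<Rightarrow> (real \<Rightarrow> real \<Rightarrow> ('a::finite) series) \<Rightarrow> (real \<Rightarrow> real \<Rightarrow> 'a series) \<Rightarrow> bool" where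
  "minimal_extension T N X Y \<longleftrightarrow>
     sgrm T X \<and> extension T N X Y \<and> (\<forall>s\<in>{0..T}. diag_deriv T X s \<in> lieN N)"

end

theory Submission
  imports Defs
begin

(* Differentiating Chen's relation at the diagonal shows that any sgrm solves the linear equation
   d/dt X_{s,t} = X_{s,t} (x) Xdot_{t,t}.  For an extension of Y the diagonal derivative agrees with
   Ydot_{t,t} up to level N, and minimality kills it above level N, so Xdot_{t,t} = Ydot_{t,t}.
   The equation is triangular in the word length, hence has exactly one solution with X_{s,s} = 1;
   integrating it level by level produces that solution.  It is an sgrm because Ydot_{t,t} is
   primitive, and right multiplication by a primitive element is a derivation of the shuffle
   product; primitivity is also what puts Ydot_{t,t} into L^N (Friedrichs' criterion, via Dynkin's
   bracketing).  On [s,t] the equation only involves Ydot_{r,r} for r < t, which is determined by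
   Y on [r,t]: this gives locality. *)

section \<open>Concatenation and shuffles of coefficient series\<close>

lemma finite_words_of_length: "finite {u::('a::finite) list. length u = n}"
  using finite_lists_length_eq[of "UNIV::'a set" n] by simp

definition one_series :: "'a series" where
  "one_series = (\<lambda>u. if u = [] then 1 else 0)"

lemma one_series_Nil [simp]: "one_series [] = 1"
  and one_series_Cons [simp]: "one_series (a # u) = 0"
  by (simp_all add: one_series_def)

lemma conc_Nil [simp]: "conc x y [] = x [] * y []"
  by (simp add: conc_def)

lemma concN_eq_conc: "length w \<le> N \<Longrightarrow> concN N x y w = conc x y w"
  by (simp add: concN_def proj_def)

lemma conc_one_series_right [simp]: "conc x one_series = x"
proof
  fix w :: "'a list"
  have "conc x one_series w = (\<Sum>k\<le>length w. if k = length w then x (take k w) else 0)"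
    unfolding conc_def one_series_def by (intro sum.cong) auto
  then show "conc x one_series w = x w" by simp
qed

lemma conc_one_series_left [simp]: "conc one_series x = x"
proof
  fix w :: "'a list"
  have "conc one_series x w = (\<Sum>k\<le>length w. if k = 0 then x (drop k w) else 0)"
    unfolding conc_def one_series_def by (intro sum.cong) auto
  then show "conc one_series x w = x w" by simp
qed

lemma conc_assoc: "conc (conc x y) z = conc x (conc y z)"
proof
  fix w :: "'a list"
  define n where "n = length w"
  define g where "g k l = x (take k w) * y (take l (drop k w)) * z (drop (l + k) w)" for k l
  have lhs: "conc (conc x y) z w = (\<Sum>m\<le>n. \<Sum>k\<le>m. g k (m - k))"
    unfolding conc_def g_def n_def
    by (auto simp: sum_distrib_right min_def drop_take intro!: sum.cong)
  have rhs: "conc x (conc y z) w = (\<Sum>k\<le>n. \<Sum>l\<le>n - k. g k l)"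
    unfolding conc_def g_def n_def
    by (auto simp: sum_distrib_left mult.assoc intro!: sum.cong)
  have "Sigma {..n} (\<lambda>k. {..n - k}) = {(k, l). k + l \<le> n}" by auto
  then have "(\<Sum>k\<le>n. \<Sum>l\<le>n - k. g k l) = (\<Sum>(k, l)\<in>{(k, l). k + l \<le> n}. g k l)"
    by (simp add: sum.Sigma)
  also have "\<dots> = (\<Sum>m\<le>n. \<Sum>k\<le>m. g k (m - k))"
    by (rule sum.triangle_reindex_eq)
  finally show "conc (conc x y) z w = conc x (conc y z) w"
    using lhs rhs by simp
qed

lemma conc_eq_sum_lessThan: "y [] = 0 \<Longrightarrow> conc x y w = (\<Sum>k<length w. x (take k w) * y (drop k w))"
  unfolding conc_def by (simp add: lessThan_Suc_atMost[symmetric])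

lemma conc_eq_plus_inner_sum:
  "x [] = 1 \<Longrightarrow> y [] = 0 \<Longrightarrow> w \<noteq> [] \<Longrightarrow>
    conc x y w = y w + (\<Sum>k\<in>{1..<length w}. x (take k w) * y (drop k w))"
  by (simp add: conc_eq_sum_lessThan lessThan_atLeast0 sum.atLeast_Suc_lessThan)

lemma conc_unit_word_right:
  "conc x (unit_word a) u = (if u \<noteq> [] \<and> last u = a then x (butlast u) else 0)"
proof (cases u rule: rev_cases)
  case (snoc u' c)
  have "conc x (unit_word a) u
      = (\<Sum>k\<le>length u'. x (take k u) * unit_word a (drop k u)) + x u * unit_word a []"
    unfolding conc_def snoc by (simp add: sum.atMost_Suc)
  also have "(\<Sum>k\<le>length u'. x (take k u) * unit_word a (drop k u))
      = (\<Sum>k\<le>length u'. if k = length u' \<and> c = a then x u' else 0)"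
    unfolding snoc unit_word_def by (intro sum.cong) auto
  finally show ?thesis
    using snoc by (simp add: unit_word_def)
qed (simp add: unit_word_def)

lemma conc_unit_word_left:
  "conc (unit_word a) x u = (if u \<noteq> [] \<and> hd u = a then x (tl u) else 0)"
proof (cases u)
  case (Cons c u')
  have "conc (unit_word a) x u
      = unit_word a [] * x u + (\<Sum>k\<le>length u'. unit_word a (take (Suc k) u) * x (drop (Suc k) u))"
    unfolding conc_def Cons by (simp only: length_Cons sum.atMost_Suc_shift) simp
  also have "(\<Sum>k\<le>length u'. unit_word a (take (Suc k) u) * x (drop (Suc k) u))
      = (\<Sum>k\<le>length u'. if k = 0 \<and> c = a then x u' else 0)"
    unfolding Cons unit_word_def by (intro sum.cong) auto
  finally show ?thesis
    using Cons by (simp add: unit_word_def)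
qed (simp add: unit_word_def)

lemma length_if_shr_nonzero: "shr a b c \<noteq> 0 \<Longrightarrow> length c = length a + length b"
proof (induction a b c rule: shr.induct)
  case (4 i w j v k u)
  then show ?case
    by (cases "k = i"; cases "k = j"; cases "shr w (j # v) u = 0") auto
qed (auto split: if_splits)

lemma length_if_shuffle_nonzero: "shuffle v w u \<noteq> 0 \<Longrightarrow> length u = length v + length w"
  unfolding shuffle_def using length_if_shr_nonzero by fastforce

lemma shuffle_Nil_left: "shuffle [] w u = (if u = w then 1 else 0)"
  unfolding shuffle_def by auto

lemma shuffle_Nil_right: "shuffle w [] u = (if u = w then 1 else 0)"
proof -
  have "shr a [] c = (if c = a then 1 else 0)" for a c :: "'a list"
    by (cases a) auto
  then show ?thesis
    unfolding shuffle_def by auto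
qed

lemma shuffle_at_Nil: "shuffle v w [] = (if v = [] \<and> w = [] then 1 else 0)"
  unfolding shuffle_def by (cases "rev v"; cases "rev w") auto

lemma shuffle_snoc:
  "shuffle (v @ [a]) (w @ [b]) (u @ [c])
     = (if c = a then shuffle v (w @ [b]) u else 0) + (if c = b then shuffle (v @ [a]) w u else 0)"
  unfolding shuffle_def by simp

lemma pair_shuffle_Nil_left [simp]: "pair_shuffle x [] w = x w"
proof -
  have "pair_shuffle x [] w = (\<Sum>u\<in>{u. length u = length w}. if u = w then x u else 0)"
    unfolding pair_shuffle_def by (auto simp: shuffle_Nil_left intro!: sum.cong)
  then show ?thesis
    by (simp add: finite_words_of_length)
qed

lemma pair_shuffle_Nil_right [simp]: "pair_shuffle x w [] = x w"
proof -
  have "pair_shuffle x w [] = (\<Sum>u\<in>{u. length u = length w}. if u = w then x u else 0)"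
    unfolding pair_shuffle_def by (auto simp: shuffle_Nil_right intro!: sum.cong)
  then show ?thesis
    by (simp add: finite_words_of_length)
qed

lemma pair_shuffle_add:
  "pair_shuffle (\<lambda>u. x u + y u) v w = pair_shuffle x v w + pair_shuffle y v w"
  unfolding pair_shuffle_def by (simp add: distrib_left sum.distrib)

lemma pair_shuffle_scale: "pair_shuffle (\<lambda>u. c * x u) v w = c * pair_shuffle x v w"
  unfolding pair_shuffle_def by (simp add: sum_distrib_left algebra_simps)

lemma pair_shuffle_one_series: "pair_shuffle one_series v w = one_series v * one_series w"
proof (cases "v = [] \<or> w = []")
  case False
  then have "pair_shuffle one_series v w = 0"
    unfolding pair_shuffle_def by (intro sum.neutral ballI) (auto simp: one_series_def)
  then show ?thesis
    using False by (auto simp: one_series_def)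
qed (auto simp: one_series_def)

lemma has_real_derivative_pair_shuffle:
  assumes "\<And>u. ((\<lambda>t. F t u) has_real_derivative F' u) (at x within S)"
  shows "((\<lambda>t. pair_shuffle (F t) v w) has_real_derivative pair_shuffle F' v w) (at x within S)"
  unfolding pair_shuffle_def by (intro DERIV_sum DERIV_cmult assms)

definition rquot :: "'a series \<Rightarrow> 'a \<Rightarrow> 'a series" where
  "rquot z c = (\<lambda>u. z (u @ [c]))"

lemma sum_words_length_Suc:
  "(\<Sum>u\<in>{u::('a::finite) list. length u = Suc m}. f u)
     = (\<Sum>u\<in>{u. length u = m}. \<Sum>c\<in>UNIV. f (u @ [c]))"
proof -
  have eq: "{u::'a list. length u = Suc m} = (\<lambda>(u, c). u @ [c]) ` ({u. length u = m} \<times> UNIV)"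
  proof (intro set_eqI iffI)
    fix x :: "'a list"
    assume "x \<in> {u. length u = Suc m}"
    then have "x \<noteq> []" "length (butlast x) = m" by auto
    then show "x \<in> (\<lambda>(u, c). u @ [c]) ` ({u. length u = m} \<times> UNIV)"
      by (intro image_eqI[of _ _ "(butlast x, last x)"]) auto
  qed auto
  have "inj_on (\<lambda>(u, c). u @ [c]) ({u::'a list. length u = m} \<times> UNIV)"
    by (auto simp: inj_on_def)
  then show ?thesis
    unfolding eq by (simp add: sum.reindex sum.cartesian_product finite_words_of_length prod.case_distrib)
qed

lemma pair_shuffle_snoc:
  fixes z :: "('a::finite) series"
  shows "pair_shuffle z (v @ [a]) (w @ [b])
           = pair_shuffle (rquot z a) v (w @ [b]) + pair_shuffle (rquot z b) (v @ [a]) w"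
proof -
  have delta: "(\<Sum>c\<in>UNIV. (if c = a' then A else 0) * g c) = A * g a'" for a' :: 'a and A and g :: "'a \<Rightarrow> real"
  proof -
    have "(\<Sum>c\<in>UNIV. (if c = a' then A else 0) * g c) = (\<Sum>c\<in>UNIV. if c = a' then A * g c else 0)"
      by (intro sum.cong) auto
    then show ?thesis by simp
  qed
  have "pair_shuffle z (v @ [a]) (w @ [b])
      = (\<Sum>u\<in>{u. length u = Suc (length v + length w + 1)}. shuffle (v @ [a]) (w @ [b]) u * z u)"
    unfolding pair_shuffle_def by simp
  also have "\<dots> = (\<Sum>u\<in>{u. length u = length v + length w + 1}. \<Sum>c\<in>UNIV.
      ((if c = a then shuffle v (w @ [b]) u else 0) + (if c = b then shuffle (v @ [a]) w u else 0)) * z (u @ [c]))"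
    by (simp only: sum_words_length_Suc shuffle_snoc)
  also have "\<dots> = (\<Sum>u\<in>{u. length u = length v + length w + 1}.
      shuffle v (w @ [b]) u * z (u @ [a]) + shuffle (v @ [a]) w u * z (u @ [b]))"
    by (intro sum.cong refl) (simp only: distrib_right sum.distrib delta)
  also have "\<dots> = pair_shuffle (rquot z a) v (w @ [b]) + pair_shuffle (rquot z b) (v @ [a]) w"
    unfolding pair_shuffle_def rquot_def by (simp add: sum.distrib)
  finally show ?thesis .
qed

lemma rquot_conc: "rquot (conc x y) c = (\<lambda>u. conc x (rquot y c) u + y [] * rquot x c u)"
proof
  fix u
  have "conc x y (u @ [c])
      = (\<Sum>k\<le>length u. x (take k (u @ [c])) * y (drop k (u @ [c]))) + x (u @ [c]) * y []"
    unfolding conc_def by (simp add: sum.atMost_Suc)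
  also have "(\<Sum>k\<le>length u. x (take k (u @ [c])) * y (drop k (u @ [c])))
      = (\<Sum>k\<le>length u. x (take k u) * y (drop k u @ [c]))"
    by (intro sum.cong) auto
  finally show "rquot (conc x y) c u = conc x (rquot y c) u + y [] * rquot x c u"
    unfolding conc_def rquot_def by simp
qed

lemma pair_shuffle_conc_snoc:
  fixes x y :: "('a::finite) series"
  shows "pair_shuffle (conc x y) (v @ [a]) (w @ [b])
     = pair_shuffle (conc x (rquot y a)) v (w @ [b]) + pair_shuffle (conc x (rquot y b)) (v @ [a]) w
       + y [] * pair_shuffle x (v @ [a]) (w @ [b])"
  unfolding pair_shuffle_snoc[of "conc x y"] pair_shuffle_snoc[of x] rquot_conc
  by (simp add: pair_shuffle_add pair_shuffle_scale algebra_simps)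

lemma sum_deconcat_snoc:
  "(\<Sum>i\<le>length (v @ [a]). f (take i (v @ [a])) (drop i (v @ [a])))
     = (\<Sum>i\<le>length v. f (take i v) (drop i v @ [a])) + f (v @ [a]) []"
proof -
  have "(\<Sum>i\<le>length v. f (take i (v @ [a])) (drop i (v @ [a])))
      = (\<Sum>i\<le>length v. f (take i v) (drop i v @ [a]))"
    by (intro sum.cong) auto
  then show ?thesis
    by (simp add: sum.atMost_Suc)
qed

lemma sum_sum_deconcat_snoc:
  "(\<Sum>i\<le>length (v @ [a]). \<Sum>j\<le>length (w @ [b]).
      F (take i (v @ [a])) (take j (w @ [b])) (drop i (v @ [a])) (drop j (w @ [b])))
   = (\<Sum>i\<le>length v. (\<Sum>j\<le>length w. F (take i v) (take j w) (drop i v @ [a]) (drop j w @ [b]))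
        + F (take i v) (w @ [b]) (drop i v @ [a]) [])
     + ((\<Sum>j\<le>length w. F (v @ [a]) (take j w) [] (drop j w @ [b])) + F (v @ [a]) (w @ [b]) [] [])"
  by (simp add: sum_deconcat_snoc[where f = "\<lambda>p p'. \<Sum>j\<le>length (w @ [b]). F p _ p' _"]
                sum_deconcat_snoc[where f = "\<lambda>q q'. F _ q _ q'"])

lemma pair_shuffle_conc:
  fixes x y :: "('a::finite) series"
  shows "pair_shuffle (conc x y) v w = (\<Sum>i\<le>length v. \<Sum>j\<le>length w.
           pair_shuffle x (take i v) (take j w) * pair_shuffle y (drop i v) (drop j w))"
proof (induction "length v + length w" arbitrary: v w x y rule: less_induct)
  case less
  show ?case
  proof (cases "v = [] \<or> w = []")
    case True
    then show ?thesis by (auto simp: conc_def)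
  next
    case False
    then obtain v' a w' b where v: "v = v' @ [a]" and w: "w = w' @ [b]"
      by (metis rev_exhaust)
    define F where "F p q p' q' = pair_shuffle x p q * pair_shuffle y p' q'" for p q p' q'
    define G where "G c p q p' q' = pair_shuffle x p q * pair_shuffle (rquot y c) p' q'" for c p q p' q'
    have IH_a: "pair_shuffle (conc x (rquot y a)) v' w
        = (\<Sum>i\<le>length v'. (\<Sum>j\<le>length w'. G a (take i v') (take j w') (drop i v') (drop j w' @ [b]))
             + G a (take i v') w (drop i v') [])"
      using less.hyps[of v' w] unfolding v w
      by (simp add: sum_deconcat_snoc[where f = "\<lambda>q q'. G a _ q _ q'"] G_def)
    have IH_b: "pair_shuffle (conc x (rquot y b)) v w'
        = (\<Sum>i\<le>length v'. \<Sum>j\<le>length w'. G b (take i v') (take j w') (drop i v' @ [a]) (drop j w'))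
          + (\<Sum>j\<le>length w'. G b v (take j w') [] (drop j w'))"
      using less.hyps[of v w'] unfolding v w
      by (simp add: sum_deconcat_snoc[where f = "\<lambda>p p'. \<Sum>j\<le>length w'. G b p _ p' _"] G_def)
    have "(\<Sum>i\<le>length v. \<Sum>j\<le>length w. F (take i v) (take j w) (drop i v) (drop j w))
        = (\<Sum>i\<le>length v'. (\<Sum>j\<le>length w'. F (take i v') (take j w') (drop i v' @ [a]) (drop j w' @ [b]))
             + F (take i v') w (drop i v' @ [a]) [])
          + ((\<Sum>j\<le>length w'. F v (take j w') [] (drop j w' @ [b])) + F v w [] [])"
      unfolding v w by (rule sum_sum_deconcat_snoc)
    also have "\<dots> = pair_shuffle (conc x (rquot y a)) v' w + pair_shuffle (conc x (rquot y b)) v w'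
        + y [] * pair_shuffle x v w"
      unfolding IH_a IH_b unfolding F_def G_def v w
      by (simp add: pair_shuffle_snoc sum.distrib distrib_left algebra_simps rquot_def)
    also have "\<dots> = pair_shuffle (conc x y) v w"
      unfolding v w by (rule pair_shuffle_conc_snoc[symmetric])
    finally show ?thesis
      unfolding F_def by simp
  qed
qed

section \<open>Primitive elements are Lie polynomials\<close>

text \<open>\<open>bracket_rev (rev w)\<close> is the left-normed bracket \<open>[\<dots>[[e\<^sub>w\<^sub>1, e\<^sub>w\<^sub>2], e\<^sub>w\<^sub>3], \<dots>, e\<^sub>w\<^sub>n]\<close>.
  Its coefficients are given by Dynkin's formula \<open>bracket_coeff\<close>, which is the convolution of the
  antipode of the shuffle algebra with the grading operator; \<open>antipode_coeff\<close> is the same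
  convolution with the identity, hence the counit.\<close>

fun bracket_rev :: "'a list \<Rightarrow> 'a series" where
  "bracket_rev [] = (\<lambda>_. 0)"
| "bracket_rev (a # ws) = (if ws = [] then unit_word a else
     (\<lambda>u. conc (bracket_rev ws) (unit_word a) u - conc (unit_word a) (bracket_rev ws) u))"

definition split_shuffle :: "nat \<Rightarrow> 'a list \<Rightarrow> 'a series" where
  "split_shuffle k x = shuffle (rev (take k x)) (drop k x)"

definition bracket_coeff :: "'a list \<Rightarrow> 'a list \<Rightarrow> real" where
  "bracket_coeff w x = (\<Sum>k\<le>length x. (-1) ^ k * real (length x - k) * split_shuffle k x w)"

definition antipode_coeff :: "'a list \<Rightarrow> 'a list \<Rightarrow> real" where
  "antipode_coeff w x = (\<Sum>k\<le>length x. (-1) ^ k * split_shuffle k x w)"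

lemma bracket_rev_in_lie_poly: "ws \<noteq> [] \<Longrightarrow> bracket_rev ws \<in> lie_poly"
  by (induction ws) (auto intro: lie_poly.intros)

lemma zero_in_lie_poly: "(\<lambda>_. 0) \<in> lie_poly"
  using lie_poly.smult[OF lie_poly.gen, of 0] by simp

lemma sum_in_lie_poly:
  "finite A \<Longrightarrow> (\<And>i. i \<in> A \<Longrightarrow> f i \<in> lie_poly) \<Longrightarrow> (\<lambda>x. \<Sum>i\<in>A. c i * f i x) \<in> lie_poly"
proof (induction A rule: finite_induct)
  case (insert a A)
  then have "(\<lambda>x. c a * f a x + (\<Sum>i\<in>A. c i * f i x)) \<in> lie_poly"
    by (intro lie_poly.add lie_poly.smult) auto
  then show ?case
    using insert by simp
qed (simp add: zero_in_lie_poly)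

lemma split_shuffle_snoc_interior:
  assumes "0 < k" "k < length x"
  shows "split_shuffle k x (w @ [a]) =
      (if a = last x then split_shuffle k (butlast x) w else 0)
    + (if a = hd x then split_shuffle (k - 1) (tl x) w else 0)"
proof -
  obtain c x' where x: "x = c # x'"
    using assms by (cases x) auto
  define V where "V = rev (take (k - 1) x')"
  define D where "D = drop k x"
  have "D \<noteq> []"
    using assms by (simp add: D_def)
  then have D: "butlast D @ [last D] = D"
    by simp
  have V: "rev (take k x) = V @ [c]"
    using assms unfolding V_def x by (cases k) auto
  have last_D: "last D = last x"
    using assms by (simp add: D_def last_drop)
  have tl_x: "split_shuffle (k - 1) (tl x) w = shuffle V D w"
    using assms unfolding V_def D_def x split_shuffle_def by (cases k) auto
  have butlast_x: "split_shuffle k (butlast x) w = shuffle (V @ [c]) (butlast D) w"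
    using assms V unfolding D_def split_shuffle_def by (simp add: take_butlast drop_butlast)
  have "split_shuffle k x (w @ [a]) = shuffle (V @ [c]) (butlast D @ [last D]) (w @ [a])"
    unfolding D using V by (simp add: split_shuffle_def D_def)
  also have "\<dots> = (if a = c then shuffle V (butlast D @ [last D]) w else 0)
      + (if a = last D then shuffle (V @ [c]) (butlast D) w else 0)"
    by (rule shuffle_snoc)
  also have "\<dots> = (if a = last x then split_shuffle k (butlast x) w else 0)
      + (if a = hd x then split_shuffle (k - 1) (tl x) w else 0)"
    unfolding D unfolding tl_x butlast_x last_D by (simp add: x)
  finally show ?thesis .
qed

lemma split_shuffle_snoc:
  assumes "x \<noteq> []" "k \<le> length x"
  shows "split_shuffle k x (w @ [a]) =
      (if k < length x \<and> a = last x then split_shuffle k (butlast x) w else 0)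
    + (if 0 < k \<and> a = hd x then split_shuffle (k - 1) (tl x) w else 0)"
proof -
  consider "k = 0" | "k = length x" | "0 < k" "k < length x"
    using assms by linarith
  then show ?thesis
  proof cases
    case 1
    then show ?thesis
      using assms by (auto simp: split_shuffle_def shuffle_Nil_left snoc_eq_iff_butlast)
  next
    case 2
    have "rev x = rev (tl x) @ [hd x]"
      using assms(1) by (cases x) auto
    then have "w @ [a] = rev x \<longleftrightarrow> a = hd x \<and> w = rev (tl x)"
      by auto
    then show ?thesis
      using 2 assms by (auto simp: split_shuffle_def shuffle_Nil_right shuffle_Nil_left)
  next
    case 3
    then show ?thesis
      by (simp add: split_shuffle_snoc_interior)
  qed
qed

lemma weighted_split_shuffle_snoc:
  fixes c :: "nat \<Rightarrow> real"
  assumes "x \<noteq> []"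
  shows "(\<Sum>k\<le>length x. c k * split_shuffle k x (w @ [a]))
    = (if a = last x then \<Sum>k\<le>length x - 1. c k * split_shuffle k (butlast x) w else 0)
    + (if a = hd x then \<Sum>k\<le>length x - 1. c (Suc k) * split_shuffle k (tl x) w else 0)"
proof -
  obtain m where m: "length x = Suc m"
    using assms by (cases x) auto
  define U1 where "U1 k = split_shuffle k (butlast x) w" for k
  define U2 where "U2 k = split_shuffle k (tl x) w" for k
  have last_term: "(\<Sum>k\<le>Suc m. c k * (if k < Suc m \<and> P then U1 k else 0))
      = (if P then \<Sum>k\<le>m. c k * U1 k else 0)" for P
    by (simp add: sum.atMost_Suc)
  have first_term: "(\<Sum>k\<le>Suc m. c k * (if 0 < k \<and> P then U2 (k - 1) else 0))
      = (if P then \<Sum>k\<le>m. c (Suc k) * U2 k else 0)" for P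
    by (simp only: sum.atMost_Suc_shift) simp
  have "(\<Sum>k\<le>Suc m. c k * split_shuffle k x (w @ [a]))
    = (\<Sum>k\<le>Suc m. c k * ((if k < Suc m \<and> a = last x then U1 k else 0)
                          + (if 0 < k \<and> a = hd x then U2 (k - 1) else 0)))"
    using split_shuffle_snoc[OF assms] m unfolding U1_def U2_def by (intro sum.cong) auto
  also have "\<dots> = (if a = last x then \<Sum>k\<le>m. c k * U1 k else 0)
                 + (if a = hd x then \<Sum>k\<le>m. c (Suc k) * U2 k else 0)"
    by (simp only: distrib_left sum.distrib last_term first_term)
  finally show ?thesis
    unfolding m U1_def U2_def by simp
qed

lemma bracket_coeff_snoc:
  assumes "x \<noteq> []"
  shows "bracket_coeff (w @ [a]) x
    = (if a = last x then bracket_coeff w (butlast x) + antipode_coeff w (butlast x) else 0)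
    - (if a = hd x then bracket_coeff w (tl x) else 0)"
proof -
  have "(\<Sum>k\<le>length x - 1. (-1) ^ k * real (length x - k) * split_shuffle k (butlast x) w)
      = bracket_coeff w (butlast x) + antipode_coeff w (butlast x)"
  proof -
    have "real (length x - k) = real (length x - Suc k) + 1" if "k \<le> length x - 1" for k
      using that assms by (cases x) (auto simp: of_nat_diff)
    then show ?thesis
      unfolding bracket_coeff_def antipode_coeff_def sum.distrib[symmetric]
      by (intro sum.cong) (auto simp: algebra_simps)
  qed
  moreover have "(\<Sum>k\<le>length x - 1. (-1) ^ Suc k * real (length x - Suc k) * split_shuffle k (tl x) w)
      = - bracket_coeff w (tl x)"
    unfolding bracket_coeff_def sum_negf[symmetric] by (intro sum.cong) auto
  ultimately show ?thesis
    using weighted_split_shuffle_snoc[OF assms, of "\<lambda>k. (-1) ^ k * real (length x - k)"]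
    unfolding bracket_coeff_def[of "w @ [a]"] by simp
qed

lemma antipode_coeff_snoc:
  assumes "x \<noteq> []"
  shows "antipode_coeff (w @ [a]) x
    = (if a = last x then antipode_coeff w (butlast x) else 0)
    - (if a = hd x then antipode_coeff w (tl x) else 0)"
proof -
  have "(\<Sum>k\<le>length x - 1. (-1) ^ Suc k * split_shuffle k (tl x) w) = - antipode_coeff w (tl x)"
    unfolding antipode_coeff_def sum_negf[symmetric] by (intro sum.cong) auto
  then show ?thesis
    using weighted_split_shuffle_snoc[OF assms, of "\<lambda>k. (-1) ^ k"]
    unfolding antipode_coeff_def by simp
qed

lemma split_shuffle_at_Nil: "split_shuffle k x [] = (if x = [] then 1 else 0)"
  by (auto simp: split_shuffle_def shuffle_at_Nil)

lemma antipode_coeff_Nil: "antipode_coeff [] x = (if x = [] then 1 else 0)"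
  by (cases "x = []") (simp_all add: antipode_coeff_def split_shuffle_at_Nil)

lemma bracket_coeff_Nil: "bracket_coeff [] x = 0"
  unfolding bracket_coeff_def split_shuffle_at_Nil by (intro sum.neutral) auto

lemma bracket_coeff_Nil_right: "bracket_coeff w [] = 0"
  by (simp add: bracket_coeff_def)

lemma antipode_coeff_eq_0: "w \<noteq> [] \<Longrightarrow> antipode_coeff w x = 0"
proof (induction w arbitrary: x rule: rev_induct)
  case (snoc a w)
  show ?case
  proof (cases "x = []")
    case True
    then show ?thesis
      by (simp add: antipode_coeff_def split_shuffle_def shuffle_Nil_left)
  next
    case x: False
    show ?thesis
    proof (cases "w = []")
      case True
      have "butlast x = [] \<longleftrightarrow> tl x = []"
        using x by (cases x) auto
      moreover have "butlast x = [] \<Longrightarrow> last x = hd x"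
        using x by (cases x) auto
      ultimately show ?thesis
        using True antipode_coeff_snoc[OF x, of "[]" a] by (simp add: antipode_coeff_Nil)
    next
      case False
      then show ?thesis
        using antipode_coeff_snoc[OF x, of w a] snoc.IH by simp
    qed
  qed
qed simp

lemma bracket_rev_eq_bracket_coeff: "bracket_rev (rev w) x = bracket_coeff w x"
proof (induction w arbitrary: x rule: rev_induct)
  case Nil
  then show ?case
    by (simp add: bracket_coeff_Nil)
next
  case (snoc a w)
  show ?case
  proof (cases "x = []")
    case True
    then show ?thesis
      using snoc.IH by (cases "w = []") (simp_all add: bracket_coeff_Nil_right conc_unit_word_left unit_word_def)
  next
    case x: False
    show ?thesis
    proof (cases "w = []")
      case True
      have "x = [a] \<longleftrightarrow> last x = a \<and> butlast x = []"
        using x by (metis append_Nil snoc_eq_iff_butlast)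
      then show ?thesis
        using True bracket_coeff_snoc[OF x, of "[]" a]
        by (auto simp: unit_word_def antipode_coeff_Nil bracket_coeff_Nil)
    next
      case False
      then have "bracket_rev (rev (w @ [a])) x
          = conc (bracket_rev (rev w)) (unit_word a) x - conc (unit_word a) (bracket_rev (rev w)) x"
        by simp
      also have "\<dots> = (if last x = a then bracket_coeff w (butlast x) else 0)
          - (if hd x = a then bracket_coeff w (tl x) else 0)"
        using x by (simp add: conc_unit_word_left conc_unit_word_right snoc.IH)
      also have "\<dots> = bracket_coeff (w @ [a]) x"
        unfolding bracket_coeff_snoc[OF x] antipode_coeff_eq_0[OF False] by auto
      finally show ?thesis .
    qed
  qed
qed

lemma bracket_coeff_eq_0_if_length: "length w \<noteq> length x \<Longrightarrow> bracket_coeff w x = 0"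
  unfolding bracket_coeff_def split_shuffle_def
proof (intro sum.neutral ballI)
  fix k
  assume "length w \<noteq> length x" "k \<in> {..length x}"
  then have "shuffle (rev (take k x)) (drop k x) w = 0"
    using length_if_shuffle_nonzero[of "rev (take k x)" "drop k x" w] by auto
  then show "(-1) ^ k * real (length x - k) * shuffle (rev (take k x)) (drop k x) w = 0"
    by simp
qed

lemma bracket_coeff_dynkin:
  fixes P :: "('a::finite) series"
  assumes primitive: "\<And>v w. v \<noteq> [] \<Longrightarrow> w \<noteq> [] \<Longrightarrow> pair_shuffle P v w = 0"
    and "x \<noteq> []"
  shows "(\<Sum>V\<in>{V. length V = length x}. P V * bracket_coeff V x) = real (length x) * P x"
proof -
  define n where "n = length x"
  have "(\<Sum>V\<in>{V. length V = n}. P V * bracket_coeff V x)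
      = (\<Sum>V\<in>{V. length V = n}. \<Sum>k\<le>n. (-1) ^ k * real (n - k) * (split_shuffle k x V * P V))"
    unfolding bracket_coeff_def n_def by (simp add: sum_distrib_left mult_ac)
  also have "\<dots> = (\<Sum>k\<le>n. (-1) ^ k * real (n - k) * (\<Sum>V\<in>{V. length V = n}. split_shuffle k x V * P V))"
    by (subst sum.swap) (simp add: sum_distrib_left)
  also have "\<dots> = (\<Sum>k\<le>n. (-1) ^ k * real (n - k) * pair_shuffle P (rev (take k x)) (drop k x))"
    unfolding pair_shuffle_def split_shuffle_def n_def by simp
  also have "\<dots> = (\<Sum>k\<le>n. if k = 0 then real n * P x else 0)"
  proof (intro sum.cong refl)
    fix k
    assume "k \<in> {..n}"
    then consider "k = 0" | "k = n" | "0 < k" "k < n"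
      by fastforce
    then show "(-1) ^ k * real (n - k) * pair_shuffle P (rev (take k x)) (drop k x)
        = (if k = 0 then real n * P x else 0)"
    proof cases
      case 3
      then have "rev (take k x) \<noteq> []" "drop k x \<noteq> []"
        by (auto simp: n_def)
      then show ?thesis
        using 3 primitive by simp
    qed (use \<open>x \<noteq> []\<close> in \<open>auto simp: n_def\<close>)
  qed
  finally show ?thesis
    by (simp add: n_def)
qed

theorem primitive_in_lieN:
  fixes P :: "('a::finite) series"
  assumes "P [] = 0" and "\<And>u. length u > N \<Longrightarrow> P u = 0"
    and primitive: "\<And>v w. v \<noteq> [] \<Longrightarrow> w \<noteq> [] \<Longrightarrow> pair_shuffle P v w = 0"
  shows "P \<in> lieN N"
proof -
  define W where "W = {V::'a list. length V \<le> N}"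
  have "finite W"
    unfolding W_def using finite_lists_length_le[of "UNIV::'a set" N] by simp
  define L where "L x = (\<Sum>V\<in>W. (P V / real (length V)) * bracket_rev (rev V) x)" for x
  have "L \<in> lie_poly"
  proof -
    have "bracket_rev (rev V) \<in> lie_poly" for V :: "'a list"
      by (cases "V = []") (simp_all add: zero_in_lie_poly bracket_rev_in_lie_poly)
    then show ?thesis
      unfolding L_def[abs_def] using \<open>finite W\<close> by (intro sum_in_lie_poly)
  qed
  moreover have "proj N L x = P x" for x
  proof (cases "length x \<le> N \<and> x \<noteq> []")
    case True
    have "{V. length V = length x} \<subseteq> W"
      using True by (auto simp: W_def)
    then have "L x = (\<Sum>V\<in>{V. length V = length x}. (P V / real (length V)) * bracket_coeff V x)"
      unfolding L_def bracket_rev_eq_bracket_coeff using \<open>finite W\<close>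
      by (intro sum.mono_neutral_right) (auto simp: bracket_coeff_eq_0_if_length)
    also have "\<dots> = (\<Sum>V\<in>{V. length V = length x}. P V * bracket_coeff V x) / real (length x)"
      by (simp add: sum_divide_distrib)
    also have "\<dots> = P x"
      using True bracket_coeff_dynkin[OF primitive] by simp
    finally show ?thesis
      using True by (simp add: proj_def)
  next
    case False
    then show ?thesis
      using assms(1,2) by (auto simp: proj_def L_def bracket_rev_eq_bracket_coeff bracket_coeff_Nil_right)
  qed
  ultimately show ?thesis
    unfolding lieN_def by (metis image_eqI ext)
qed

section \<open>Smooth functions on an interval\<close>

lemma has_real_derivative_transform:
  "x \<in> S \<Longrightarrow> (\<And>y. y \<in> S \<Longrightarrow> g y = f y) \<Longrightarrow> (f has_real_derivative D) (at x within S)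
    \<Longrightarrow> (g has_real_derivative D) (at x within S)"
  unfolding has_field_derivative_def by (rule has_derivative_transform)

lemma vector_derivative_interval_eq:
  fixes a b :: real
  assumes "a < b" "x \<in> {a..b}" "(f has_real_derivative d) (at x within {a..b})"
  shows "vector_derivative f (at x within {a..b}) = d"
  using vector_derivative_within_closed_interval[OF assms(1,2), of f d] assms(3)
  by (simp add: has_real_derivative_iff_has_vector_derivative)

lemma has_real_derivative_interval_unique:
  fixes a b :: real
  assumes "a < b" "x \<in> {a..b}" "(f has_real_derivative d1) (at x within {a..b})"
    "(f has_real_derivative d2) (at x within {a..b})"
  shows "d1 = d2"
  using vector_derivative_interval_eq[OF assms(1,2,3)] vector_derivative_interval_eq[OF assms(1,2,4)]
  by simp

definition derivative_on :: "real set \<Rightarrow> (real \<Rightarrow> real) \<Rightarrow> (real \<Rightarrow> real) \<Rightarrow> bool" where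
  "derivative_on S g g' \<longleftrightarrow> (\<forall>x\<in>S. (g has_real_derivative g' x) (at x within S))"

lemma smooth_on_derivative:
  assumes "smooth_on S g"
  obtains g' where "derivative_on S g g'" and "smooth_on S g'"
proof -
  obtain f where f0: "\<forall>x\<in>S. f 0 x = g x"
    and f: "\<forall>k. \<forall>x\<in>S. (f k has_real_derivative f (Suc k) x) (at x within S)"
    using assms unfolding smooth_on_def by blast
  have "derivative_on S g (f 1)"
    unfolding derivative_on_def
  proof
    fix x
    assume "x \<in> S"
    then show "(g has_real_derivative f 1 x) (at x within S)"
      using f f0 by (intro has_real_derivative_transform[of x S g "f 0"]) auto
  qed
  moreover have "smooth_on S (f 1)"
    unfolding smooth_on_def using f by (intro exI[of _ "\<lambda>k. f (Suc k)"]) auto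
  ultimately show thesis
    by (rule that)
qed

lemma smooth_onI_derivative:
  assumes "derivative_on S g g'" and "smooth_on S g'"
  shows "smooth_on S g"
proof -
  obtain f where f0: "\<forall>x\<in>S. f 0 x = g' x"
    and f: "\<forall>k. \<forall>x\<in>S. (f k has_real_derivative f (Suc k) x) (at x within S)"
    using assms(2) unfolding smooth_on_def by blast
  define f' where "f' k = (case k of 0 \<Rightarrow> g | Suc j \<Rightarrow> f j)" for k
  have "(f' k has_real_derivative f' (Suc k) x) (at x within S)" if "x \<in> S" for k x
    using assms(1) f0 f that by (cases k) (simp_all add: f'_def derivative_on_def)
  then show ?thesis
    unfolding smooth_on_def by (intro exI[of _ f']) (simp add: f'_def)
qed

lemma smooth_on_coinduct:
  assumes "C g" and step: "\<And>h. C h \<Longrightarrow> \<exists>h'. derivative_on S h h' \<and> C h'"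
  shows "smooth_on S g"
proof -
  define next_deriv where "next_deriv h = (SOME h'. derivative_on S h h' \<and> C h')" for h
  have next_deriv: "derivative_on S h (next_deriv h) \<and> C (next_deriv h)" if "C h" for h
    unfolding next_deriv_def using step[OF that] by (rule someI_ex)
  define f where "f k = (next_deriv ^^ k) g" for k
  have "C (f k)" for k
    by (induction k) (auto simp: f_def assms(1) next_deriv)
  then have "derivative_on S (f k) (f (Suc k))" for k
    using next_deriv by (simp add: f_def)
  then show ?thesis
    unfolding smooth_on_def derivative_on_def by (intro exI[of _ f]) (simp add: f_def)
qed

text \<open>By the product rule the algebra generated by the smooth functions is closed under
  differentiation, so by coinduction it consists of smooth functions.\<close>

inductive smooth_algebra :: "real set \<Rightarrow> (real \<Rightarrow> real) \<Rightarrow> bool" for S where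
  smooth: "smooth_on S g \<Longrightarrow> smooth_algebra S g"
| const: "smooth_algebra S (\<lambda>x. c)"
| add: "smooth_algebra S f \<Longrightarrow> smooth_algebra S g \<Longrightarrow> smooth_algebra S (\<lambda>x. f x + g x)"
| mult: "smooth_algebra S f \<Longrightarrow> smooth_algebra S g \<Longrightarrow> smooth_algebra S (\<lambda>x. f x * g x)"

lemma smooth_algebra_derivative:
  "smooth_algebra S h \<Longrightarrow> \<exists>h'. derivative_on S h h' \<and> smooth_algebra S h'"
proof (induction rule: smooth_algebra.induct)
  case (smooth g)
  then obtain g' where "derivative_on S g g'" "smooth_on S g'"
    by (rule smooth_on_derivative)
  then show ?case
    by (blast intro: smooth_algebra.smooth)
next
  case (const c)
  show ?case
    by (rule exI[of _ "\<lambda>x. 0"]) (auto simp: derivative_on_def intro: smooth_algebra.const)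
next
  case (add f g)
  then obtain f' g' where "derivative_on S f f'" "smooth_algebra S f'" "derivative_on S g g'" "smooth_algebra S g'"
    by blast
  then show ?case
    by (intro exI[of _ "\<lambda>x. f' x + g' x"])
      (auto simp: derivative_on_def intro!: smooth_algebra.add derivative_intros)
next
  case (mult f g)
  then obtain f' g' where "derivative_on S f f'" "smooth_algebra S f'" "derivative_on S g g'" "smooth_algebra S g'"
    by blast
  then show ?case
    using mult.hyps
    by (intro exI[of _ "\<lambda>x. f' x * g x + g' x * f x"])
      (auto simp: derivative_on_def intro!: smooth_algebra.add smooth_algebra.mult DERIV_mult)
qed

lemma smooth_on_if_smooth_algebra: "smooth_algebra S g \<Longrightarrow> smooth_on S g"
  by (rule smooth_on_coinduct[where C = "smooth_algebra S"]) (auto intro: smooth_algebra_derivative)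

lemma smooth_on_cong: "smooth_on S g \<Longrightarrow> (\<And>x. x \<in> S \<Longrightarrow> g x = h x) \<Longrightarrow> smooth_on S h"
  unfolding smooth_on_def by auto

lemma smooth_on_const [simp]: "smooth_on S (\<lambda>x. c)"
  by (rule smooth_on_if_smooth_algebra) (rule smooth_algebra.const)

lemma smooth_on_add: "smooth_on S f \<Longrightarrow> smooth_on S g \<Longrightarrow> smooth_on S (\<lambda>x. f x + g x)"
  by (rule smooth_on_if_smooth_algebra) (intro smooth_algebra.add smooth_algebra.smooth)

lemma smooth_on_mult: "smooth_on S f \<Longrightarrow> smooth_on S g \<Longrightarrow> smooth_on S (\<lambda>x. f x * g x)"
  by (rule smooth_on_if_smooth_algebra) (intro smooth_algebra.mult smooth_algebra.smooth)

lemma smooth_on_diff: "smooth_on S f \<Longrightarrow> smooth_on S g \<Longrightarrow> smooth_on S (\<lambda>x. f x - g x)"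
  using smooth_on_add[of S f "\<lambda>x. (-1) * g x"] smooth_on_mult[of S "\<lambda>x. -1" g] by simp

lemma smooth_on_sum:
  "finite A \<Longrightarrow> (\<And>i. i \<in> A \<Longrightarrow> smooth_on S (f i)) \<Longrightarrow> smooth_on S (\<lambda>x. \<Sum>i\<in>A. f i x)"
  by (induction A rule: finite_induct) (auto intro: smooth_on_add)

lemma smooth_on_imp_continuous_on: "smooth_on S g \<Longrightarrow> continuous_on S g"
  by (erule smooth_on_derivative) (auto simp: derivative_on_def intro: DERIV_continuous_on)

lemma smooth_on_has_vector_derivative:
  fixes a b :: real
  assumes "a < b" "smooth_on {a..b} g" "t \<in> {a..b}"
  shows "(g has_real_derivative vector_derivative g (at t within {a..b})) (at t within {a..b})"
proof -
  obtain g' where "derivative_on {a..b} g g'"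
    using smooth_on_derivative[OF assms(2)] by blast
  then have "(g has_real_derivative g' t) (at t within {a..b})"
    using assms(3) by (simp add: derivative_on_def)
  then show ?thesis
    using vector_derivative_interval_eq[OF assms(1,3)] by simp
qed

section \<open>Group-like two-parameter families\<close>

lemma conc_idem_eq_0:
  assumes idem: "\<And>u. length u \<le> K \<Longrightarrow> conc x x u = x u" and "x [] = 1"
  shows "length u \<le> K \<Longrightarrow> u \<noteq> [] \<Longrightarrow> x u = 0"
proof (induction "length u" arbitrary: u rule: less_induct)
  case less
  have "conc x x u = (\<Sum>k\<le>length u. (if k = 0 then x u else 0) + (if k = length u then x u else 0))"
    unfolding conc_def
  proof (intro sum.cong refl)
    fix k
    assume "k \<in> {..length u}"
    then consider "k = 0" | "k = length u" | "0 < k" "k < length u"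
      by fastforce
    then show "x (take k u) * x (drop k u)
        = (if k = 0 then x u else 0) + (if k = length u then x u else 0)"
    proof cases
      case 3
      then have "x (take k u) = 0"
        using less by (intro less.hyps) auto
      then show ?thesis
        using 3 by simp
    qed (use \<open>x [] = 1\<close> less.prems in auto)
  qed
  also have "\<dots> = 2 * x u"
    by (simp add: sum.distrib)
  finally show ?case
    using idem[OF less.prems(1)] by simp
qed

text \<open>The empty-word coefficient of a multiplicative family is idempotent and, by Chen's relation
  through a point where the family does not vanish, non-zero.\<close>

lemma chen_Nil_eq_1:
  fixes Z :: "'a \<Rightarrow> 'a \<Rightarrow> 'b list \<Rightarrow> real"
  assumes chen: "\<And>a b c. a \<in> S \<Longrightarrow> b \<in> S \<Longrightarrow> c \<in> S \<Longrightarrow> Z a b [] = Z a c [] * Z c b []"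
    and unit: "\<And>a b w. a \<in> S \<Longrightarrow> b \<in> S \<Longrightarrow> Z a b w = Z a b w * Z a b []"
    and nonzero: "\<exists>a0\<in>S. \<exists>b0\<in>S. \<exists>w0. Z a0 b0 w0 \<noteq> 0"
    and "a \<in> S" "b \<in> S"
  shows "Z a b [] = 1"
proof -
  obtain a0 b0 w0 where 0: "a0 \<in> S" "b0 \<in> S" "Z a0 b0 w0 \<noteq> 0"
    using nonzero by blast
  have "1 = Z a0 b0 []"
    using unit[OF 0(1,2), of w0] 0(3) by (metis mult_cancel_left1)
  also have "\<dots> = Z a0 a [] * Z a b0 []"
    using chen 0 \<open>a \<in> S\<close> by blast
  also have "\<dots> = Z a0 a [] * (Z a b [] * Z b b0 [])"
    using chen 0 \<open>a \<in> S\<close> \<open>b \<in> S\<close> by metis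
  finally have "Z a0 a [] * (Z a b [] * Z b b0 []) = 1"
    by simp
  then have "Z a b [] \<noteq> 0"
    by auto
  then show ?thesis
    using unit[OF \<open>a \<in> S\<close> \<open>b \<in> S\<close>, of "[]"] by (metis mult_cancel_left1)
qed

context
  fixes T :: real and N :: nat and Y :: "real \<Rightarrow> real \<Rightarrow> ('a::finite) series"
  assumes Y: "nsgrm T N Y"
begin

lemma nsgrm_long: "s \<in> {0..T} \<Longrightarrow> t \<in> {0..T} \<Longrightarrow> length w > N \<Longrightarrow> Y s t w = 0"
  using Y unfolding nsgrm_def by blast

lemma nsgrm_shuffle:
  "s \<in> {0..T} \<Longrightarrow> t \<in> {0..T} \<Longrightarrow> length v + length w \<le> N \<Longrightarrow>
    pair_shuffle (Y s t) v w = Y s t v * Y s t w"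
  using Y unfolding nsgrm_def by blast

lemma nsgrm_chen:
  "s \<in> {0..T} \<Longrightarrow> u \<in> {0..T} \<Longrightarrow> t \<in> {0..T} \<Longrightarrow> length w \<le> N \<Longrightarrow>
    conc (Y s u) (Y u t) w = Y s t w"
  using Y unfolding nsgrm_def by (metis concN_eq_conc)

lemma nsgrm_smooth: "s \<in> {0..T} \<Longrightarrow> smooth_on {0..T} (\<lambda>t. Y s t w)"
proof (cases "length w \<le> N")
  case False
  then show "smooth_on {0..T} (\<lambda>t. Y s t w)" if "s \<in> {0..T}"
    using that nsgrm_long by (intro smooth_on_cong[OF smooth_on_const[of _ 0]]) auto
qed (use Y in \<open>auto simp: nsgrm_def\<close>)

lemma nsgrm_Nil: "s \<in> {0..T} \<Longrightarrow> t \<in> {0..T} \<Longrightarrow> Y s t [] = 1"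
proof (rule chen_Nil_eq_1[where Z = Y])
  show "Y a b w = Y a b w * Y a b []" if "a \<in> {0..T}" "b \<in> {0..T}" for a b w
    using nsgrm_shuffle[OF that, of w "[]"] nsgrm_long[OF that, of w] by (cases "length w \<le> N") auto
  show "Y a b [] = Y a c [] * Y c b []" if "a \<in> {0..T}" "b \<in> {0..T}" "c \<in> {0..T}" for a b c
    using nsgrm_chen[OF that(1,3,2), of "[]"] by simp
qed (use Y in \<open>auto simp: nsgrm_def\<close>)

lemma nsgrm_diag: "s \<in> {0..T} \<Longrightarrow> Y s s = one_series"
proof
  fix u :: "'a list"
  assume s: "s \<in> {0..T}"
  have "Y s s u = 0" if "u \<noteq> []"
  proof (cases "length u \<le> N")
    case True
    show ?thesis
      by (rule conc_idem_eq_0[where K = N]) (use nsgrm_chen[OF s s s] nsgrm_Nil[OF s s] True that in auto)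
  qed (use nsgrm_long[OF s s] in auto)
  then show "Y s s u = one_series u"
    using nsgrm_Nil[OF s s] by (cases u) auto
qed

end

context
  fixes T :: real and X :: "real \<Rightarrow> real \<Rightarrow> ('a::finite) series"
  assumes X: "sgrm T X"
begin

lemma sgrm_shuffle:
  "s \<in> {0..T} \<Longrightarrow> t \<in> {0..T} \<Longrightarrow> pair_shuffle (X s t) v w = X s t v * X s t w"
  and sgrm_chen: "s \<in> {0..T} \<Longrightarrow> u \<in> {0..T} \<Longrightarrow> t \<in> {0..T} \<Longrightarrow> conc (X s u) (X u t) = X s t"
  and sgrm_smooth: "s \<in> {0..T} \<Longrightarrow> smooth_on {0..T} (\<lambda>t. X s t w)"
  using X unfolding sgrm_def by blast+

lemma sgrm_Nil: "s \<in> {0..T} \<Longrightarrow> t \<in> {0..T} \<Longrightarrow> X s t [] = 1"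
proof (rule chen_Nil_eq_1[where Z = X])
  show "X a b w = X a b w * X a b []" if "a \<in> {0..T}" "b \<in> {0..T}" for a b w
    using sgrm_shuffle[OF that, of w "[]"] by simp
  show "X a b [] = X a c [] * X c b []" if "a \<in> {0..T}" "b \<in> {0..T}" "c \<in> {0..T}" for a b c
    using sgrm_chen[OF that(1,3,2)] by (metis conc_Nil)
qed (use X in \<open>auto simp: sgrm_def\<close>)

lemma sgrm_diag: "s \<in> {0..T} \<Longrightarrow> X s s = one_series"
proof
  fix u :: "'a list"
  assume s: "s \<in> {0..T}"
  have "X s s u = 0" if "u \<noteq> []"
    by (rule conc_idem_eq_0[where K = "length u"]) (use sgrm_chen[OF s s s] sgrm_Nil[OF s s] that in auto)
  then show "X s s u = one_series u"
    using sgrm_Nil[OF s s] by (cases u) auto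
qed

end

section \<open>The diagonal derivative of an \<open>N\<close>-sgrm\<close>

lemma chen_has_real_derivative:
  assumes "t \<in> S" and chen: "\<And>t'. t' \<in> S \<Longrightarrow> Z s t' w = conc (Z s t) (Z t t') w"
    and "\<And>u. ((\<lambda>t'. Z t t' u) has_real_derivative E u) (at t within S)"
  shows "((\<lambda>t'. Z s t' w) has_real_derivative conc (Z s t) E w) (at t within S)"
proof -
  have d: "((\<lambda>t'. conc (Z s t) (Z t t') w) has_real_derivative conc (Z s t) E w) (at t within S)"
    unfolding conc_def by (intro DERIV_sum DERIV_cmult assms)
  show ?thesis
    by (rule has_real_derivative_transform[OF \<open>t \<in> S\<close> _ d]) (simp add: chen)
qed

context
  fixes T :: real
  assumes T: "0 < T"
begin

lemma has_real_derivative_diag_deriv: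
  "t \<in> {0..T} \<Longrightarrow> smooth_on {0..T} (\<lambda>t'. Z t t' u) \<Longrightarrow>
    ((\<lambda>t'. Z t t' u) has_real_derivative diag_deriv T Z t u) (at t within {0..T})"
  unfolding diag_deriv_def using smooth_on_has_vector_derivative[OF T] by simp

lemma diag_deriv_eqI:
  "t \<in> {0..T} \<Longrightarrow> ((\<lambda>t'. Z t t' u) has_real_derivative d) (at t within {0..T}) \<Longrightarrow>
    diag_deriv T Z t u = d"
  unfolding diag_deriv_def by (rule vector_derivative_interval_eq[OF T])

lemma sgrm_has_real_derivative:
  assumes X: "sgrm T X" and "s \<in> {0..T}" "t \<in> {0..T}"
  shows "((\<lambda>t'. X s t' w) has_real_derivative conc (X s t) (diag_deriv T X t) w) (at t within {0..T})"
  using assms sgrm_chen[OF X] sgrm_smooth[OF X]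
  by (intro chen_has_real_derivative has_real_derivative_diag_deriv) auto

context
  fixes N :: nat and Y :: "real \<Rightarrow> real \<Rightarrow> ('a::finite) series"
  assumes Y: "nsgrm T N Y"
begin

lemma nsgrm_has_real_derivative:
  assumes "s \<in> {0..T}" "t \<in> {0..T}" "length w \<le> N"
  shows "((\<lambda>t'. Y s t' w) has_real_derivative conc (Y s t) (diag_deriv T Y t) w) (at t within {0..T})"
  using assms nsgrm_chen[OF Y] nsgrm_smooth[OF Y]
  by (intro chen_has_real_derivative has_real_derivative_diag_deriv) auto

lemma diag_deriv_Nil:
  assumes t: "t \<in> {0..T}"
  shows "diag_deriv T Y t [] = 0"
proof (rule diag_deriv_eqI[OF t])
  show "((\<lambda>t'. Y t t' []) has_real_derivative 0) (at t within {0..T})"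
    by (rule has_real_derivative_transform[OF t _ DERIV_const[of 1]]) (simp add: nsgrm_Nil[OF Y t])
qed

lemma diag_deriv_long:
  assumes t: "t \<in> {0..T}" and "length u > N"
  shows "diag_deriv T Y t u = 0"
proof (rule diag_deriv_eqI[OF t])
  show "((\<lambda>t'. Y t t' u) has_real_derivative 0) (at t within {0..T})"
    by (rule has_real_derivative_transform[OF t _ DERIV_const[of 0]])
      (simp add: nsgrm_long[OF Y t] \<open>length u > N\<close>)
qed

text \<open>Differentiating the shuffle identity at the diagonal, where \<open>Y t t\<close> is the unit, shows that
  \<open>diag_deriv T Y t\<close> is primitive.\<close>

lemma diag_deriv_primitive:
  assumes t: "t \<in> {0..T}" and "v \<noteq> []" "w \<noteq> []"
  shows "pair_shuffle (diag_deriv T Y t) v w = 0"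
proof (cases "length v + length w \<le> N")
  case True
  let ?D = "diag_deriv T Y t"
  have "((\<lambda>t'. Y t t' v * Y t t' w) has_real_derivative ?D v * Y t t w + ?D w * Y t t v) (at t within {0..T})"
    using t nsgrm_smooth[OF Y t] by (intro DERIV_mult has_real_derivative_diag_deriv)
  moreover have "Y t t v = 0" "Y t t w = 0"
    using nsgrm_diag[OF Y t] \<open>v \<noteq> []\<close> \<open>w \<noteq> []\<close> by (simp_all add: one_series_def)
  ultimately have "((\<lambda>t'. Y t t' v * Y t t' w) has_real_derivative 0) (at t within {0..T})"
    by simp
  then have "((\<lambda>t'. pair_shuffle (Y t t') v w) has_real_derivative 0) (at t within {0..T})"
    by (rule has_real_derivative_transform[OF t, rotated]) (simp add: nsgrm_shuffle[OF Y t _ True])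
  moreover have "((\<lambda>t'. pair_shuffle (Y t t') v w) has_real_derivative pair_shuffle ?D v w) (at t within {0..T})"
    using t nsgrm_smooth[OF Y t] by (intro has_real_derivative_pair_shuffle has_real_derivative_diag_deriv)
  ultimately show ?thesis
    using has_real_derivative_interval_unique[OF T t] by blast
next
  case False
  then show ?thesis
    unfolding pair_shuffle_def using diag_deriv_long[OF t] by (intro sum.neutral) auto
qed

lemma diag_deriv_in_lieN: "t \<in> {0..T} \<Longrightarrow> diag_deriv T Y t \<in> lieN N"
  by (intro primitive_in_lieN diag_deriv_Nil diag_deriv_long diag_deriv_primitive)

text \<open>Chen's relation gives \<open>\<partial>\<^sub>t Y 0 t = Y 0 t \<otimes> diag_deriv T Y t\<close>, so each coefficient of the
  diagonal derivative is a smooth derivative minus a polynomial in shorter coefficients.\<close>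

lemma smooth_on_diag_deriv: "smooth_on {0..T} (\<lambda>t. diag_deriv T Y t u)"
proof (induction "length u" arbitrary: u rule: less_induct)
  case less
  have 0: "0 \<in> {0..T}"
    using T by simp
  show ?case
  proof (cases "u \<noteq> [] \<and> length u \<le> N")
    case True
    obtain g' where g': "derivative_on {0..T} (\<lambda>t. Y 0 t u) g'" "smooth_on {0..T} g'"
      using smooth_on_derivative[OF nsgrm_smooth[OF Y 0]] by blast
    define M where "M t = (\<Sum>k\<in>{1..<length u}. Y 0 t (take k u) * diag_deriv T Y t (drop k u))" for t
    have M: "smooth_on {0..T} M"
      unfolding M_def using less nsgrm_smooth[OF Y 0]
      by (intro smooth_on_sum smooth_on_mult) auto
    have eq: "diag_deriv T Y t u = g' t - M t" if t: "t \<in> {0..T}" for t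
    proof -
      have "((\<lambda>t. Y 0 t u) has_real_derivative g' t) (at t within {0..T})"
        using g'(1) t by (simp add: derivative_on_def)
      then have "g' t = conc (Y 0 t) (diag_deriv T Y t) u"
        using True by (intro has_real_derivative_interval_unique[OF T t _ nsgrm_has_real_derivative[OF 0 t]]) auto
      then show ?thesis
        unfolding M_def using True t nsgrm_Nil[OF Y 0 t] diag_deriv_Nil[OF t]
        by (simp add: conc_eq_plus_inner_sum)
    qed
    show ?thesis
      by (rule smooth_on_cong[OF smooth_on_diff[OF g'(2) M]]) (simp add: eq)
  next
    case False
    then show ?thesis
      using diag_deriv_Nil diag_deriv_long by (intro smooth_on_cong[OF smooth_on_const[of _ 0]]) auto
  qed
qed

end

end

section \<open>Linear differential equations driven on the right\<close>

text \<open>Uniqueness for \<open>x' = x \<otimes> E\<close> with \<open>E\<close> free of constant term: the system is triangular in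
  the word length, so the coefficients are determined one length at a time.\<close>

lemma conc_ode_unique:
  fixes f g :: "real \<Rightarrow> 'a series"
  assumes "convex S" "finite K" "c \<in> S" "f c = g c"
    and "\<And>w. continuous_on S (\<lambda>t. f t w)" "\<And>w. continuous_on S (\<lambda>t. g t w)"
    and f': "\<And>t w. t \<in> S - K \<Longrightarrow> ((\<lambda>t. f t w) has_real_derivative conc (f t) (E t) w) (at t within S)"
    and g': "\<And>t w. t \<in> S - K \<Longrightarrow> ((\<lambda>t. g t w) has_real_derivative conc (g t) (E t) w) (at t within S)"
    and E: "\<And>t. t \<in> S - K \<Longrightarrow> E t [] = 0"
  shows "t \<in> S \<Longrightarrow> f t w = g t w"
proof (induction "length w" arbitrary: w t rule: less_induct)
  case less
  have zero_deriv: "((\<lambda>t. f t w - g t w) has_derivative (\<lambda>h. 0)) (at t within S)" if t: "t \<in> S - K" for t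
  proof -
    have "conc (f t) (E t) w - conc (g t) (E t) w
        = (\<Sum>k\<le>length w. (f t (take k w) - g t (take k w)) * E t (drop k w))"
      unfolding conc_def by (simp add: sum_subtractf left_diff_distrib)
    also have "\<dots> = 0"
    proof (intro sum.neutral ballI)
      fix k
      assume "k \<in> {..length w}"
      then consider "k = length w" | "length (take k w) < length w"
        by fastforce
      then show "(f t (take k w) - g t (take k w)) * E t (drop k w) = 0"
        by cases (use E[OF t] less.hyps t in auto)
    qed
    finally have "((\<lambda>t. f t w - g t w) has_real_derivative 0) (at t within S)"
      using DERIV_diff[OF f'[OF t, of w] g'[OF t, of w]] by simp
    then show ?thesis
      by (simp add: has_field_derivative_def lambda_zero)
  qed
  have "f t w - g t w = 0"
  proof (rule has_derivative_zero_unique_strong_convex[where f = "\<lambda>t. f t w - g t w"])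
    show "convex S" "finite K" "c \<in> S"
      by fact+
    show "continuous_on S (\<lambda>t. f t w - g t w)"
      by (intro continuous_on_diff assms(5,6))
  qed (use \<open>f c = g c\<close> zero_deriv less.prems in auto)
  then show ?case
    by simp
qed

section \<open>The minimal extension\<close>

text \<open>Above level \<open>N\<close> the extension solves \<open>\<partial>\<^sub>t X s t = X s t \<otimes> diag_deriv T Y t\<close>; the right-hand side
  of the equation for a word only involves shorter words, so this is a recursion on the word
  length. The integral from \<open>s\<close> to \<open>t\<close> is written as a difference of integrals from \<open>0\<close> so that it is
  also meaningful for \<open>t < s\<close>.\<close>

function lift :: "real \<Rightarrow> nat \<Rightarrow> (real \<Rightarrow> real \<Rightarrow> ('a::finite) series) \<Rightarrow> real \<Rightarrow> real \<Rightarrow> 'a series" where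
  "lift T N Y s t w = (if length w \<le> N then Y s t w else
     integral {0..t} (\<lambda>r. \<Sum>k<length w. lift T N Y s r (take k w) * diag_deriv T Y r (drop k w))
   - integral {0..s} (\<lambda>r. \<Sum>k<length w. lift T N Y s r (take k w) * diag_deriv T Y r (drop k w)))"
  by pat_completeness auto
termination
  by (relation "Wellfounded.measure (\<lambda>(T, N, Y, s, t, w). length w)") auto

declare lift.simps [simp del]

lemma double_sum_boundary:
  fixes a b d e :: "nat \<Rightarrow> real"
  shows "(\<Sum>i\<le>n. \<Sum>j\<le>m. a i * b j * ((if i = n then d j else 0) + (if j = m then e i else 0)))
    = a n * (\<Sum>j\<le>m. b j * d j) + b m * (\<Sum>i\<le>n. a i * e i)"
proof -
  have "(\<Sum>j\<le>m. a i * b j * ((if i = n then d j else 0) + (if j = m then e i else 0)))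
      = (if i = n then a i * (\<Sum>j\<le>m. b j * d j) else 0) + a i * b m * e i" for i
  proof -
    have "(\<Sum>j\<le>m. a i * b j * ((if i = n then d j else 0) + (if j = m then e i else 0)))
        = (\<Sum>j\<le>m. if i = n then a i * (b j * d j) else 0) + (\<Sum>j\<le>m. if j = m then a i * b j * e i else 0)"
      by (simp only: sum.distrib[symmetric]) (intro sum.cong refl, simp add: algebra_simps)
    then show ?thesis
      by (cases "i = n") (simp_all add: sum_distrib_left)
  qed
  then show ?thesis
    by (simp add: sum.distrib sum_distrib_left mult.assoc mult.left_commute)
qed

lemma pair_shuffle_conc_primitive:
  fixes X D :: "('a::finite) series"
  assumes X: "\<And>v' w'. length v' + length w' < length v + length w \<Longrightarrow>
      pair_shuffle X v' w' = X v' * X w'"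
    and "D [] = 0" and D: "\<And>v' w'. v' \<noteq> [] \<Longrightarrow> w' \<noteq> [] \<Longrightarrow> pair_shuffle D v' w' = 0"
  shows "pair_shuffle (conc X D) v w = conc X D v * X w + conc X D w * X v"
proof -
  have "pair_shuffle X (take i v) (take j w) * pair_shuffle D (drop i v) (drop j w)
      = X (take i v) * X (take j w) *
        ((if i = length v then D (drop j w) else 0) + (if j = length w then D (drop i v) else 0))"
    if "i \<le> length v" "j \<le> length w" for i j
  proof (cases "i = length v \<and> j = length w")
    case False
    then have "pair_shuffle X (take i v) (take j w) = X (take i v) * X (take j w)"
      using that by (intro X) auto
    moreover have "pair_shuffle D (drop i v) (drop j w)
        = (if i = length v then D (drop j w) else 0) + (if j = length w then D (drop i v) else 0)"
      using False that D[of "drop i v" "drop j w"] by auto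
    ultimately show ?thesis
      by simp
  qed (simp add: \<open>D [] = 0\<close>)
  then have "pair_shuffle (conc X D) v w = (\<Sum>i\<le>length v. \<Sum>j\<le>length w. X (take i v) * X (take j w) *
        ((if i = length v then D (drop j w) else 0) + (if j = length w then D (drop i v) else 0)))"
    unfolding pair_shuffle_conc by (intro sum.cong) auto
  then show ?thesis
    unfolding double_sum_boundary by (simp add: conc_def)
qed

context
  fixes T :: real and N :: nat and Y :: "real \<Rightarrow> real \<Rightarrow> ('a::finite) series"
  assumes T: "0 < T" and Y: "nsgrm T N Y"
begin

lemma lift_short: "length w \<le> N \<Longrightarrow> lift T N Y s t w = Y s t w"
  by (subst lift.simps) simp

lemma lift_smooth_and_ode:
  assumes s: "s \<in> {0..T}"
  shows "smooth_on {0..T} (\<lambda>t. lift T N Y s t w) \<and>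
    (\<forall>t\<in>{0..T}. ((\<lambda>t. lift T N Y s t w) has_real_derivative
                    conc (lift T N Y s t) (diag_deriv T Y t) w) (at t within {0..T}))"
proof (induction "length w" arbitrary: w rule: less_induct)
  case less
  show ?case
  proof (cases "length w \<le> N")
    case True
    have "conc (lift T N Y s t) (diag_deriv T Y t) w = conc (Y s t) (diag_deriv T Y t) w" for t
      unfolding conc_def using True by (intro sum.cong) (simp_all add: lift_short)
    then show ?thesis
      using True s nsgrm_smooth[OF Y s] nsgrm_has_real_derivative[OF T Y s]
      by (simp add: lift_short)
  next
    case False
    define h where "h = (\<lambda>r. \<Sum>k<length w. lift T N Y s r (take k w) * diag_deriv T Y r (drop k w))"
    have h: "smooth_on {0..T} h"
      unfolding h_def using less smooth_on_diag_deriv[OF T Y]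
      by (intro smooth_on_sum smooth_on_mult) auto
    have lift_eq: "lift T N Y s t w = integral {0..t} h - integral {0..s} h" for t
      by (subst lift.simps) (simp add: False h_def)
    have deriv: "((\<lambda>t. lift T N Y s t w) has_real_derivative h t) (at t within {0..T})"
      if "t \<in> {0..T}" for t
    proof -
      have "((\<lambda>t. integral {0..t} h - integral {0..s} h) has_real_derivative h t - 0) (at t within {0..T})"
        using that by (intro DERIV_diff integral_has_real_derivative smooth_on_imp_continuous_on h DERIV_const)
      then show ?thesis
        unfolding lift_eq by simp
    qed
    have "h t = conc (lift T N Y s t) (diag_deriv T Y t) w" if "t \<in> {0..T}" for t
      unfolding h_def using diag_deriv_Nil[OF T Y that] by (simp add: conc_eq_sum_lessThan)
    moreover have "smooth_on {0..T} (\<lambda>t. lift T N Y s t w)"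
      using deriv by (intro smooth_onI_derivative[OF _ h]) (simp add: derivative_on_def)
    ultimately show ?thesis
      using deriv by auto
  qed
qed

lemma smooth_on_lift: "s \<in> {0..T} \<Longrightarrow> smooth_on {0..T} (\<lambda>t. lift T N Y s t w)"
  using lift_smooth_and_ode by blast

lemma lift_has_real_derivative:
  "s \<in> {0..T} \<Longrightarrow> t \<in> {0..T} \<Longrightarrow>
    ((\<lambda>t. lift T N Y s t w) has_real_derivative conc (lift T N Y s t) (diag_deriv T Y t) w) (at t within {0..T})"
  using lift_smooth_and_ode by blast

lemma lift_diag: "s \<in> {0..T} \<Longrightarrow> lift T N Y s s = one_series"
proof
  fix w :: "'a list"
  assume s: "s \<in> {0..T}"
  show "lift T N Y s s w = one_series w"
  proof (cases "length w \<le> N")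
    case True
    then show ?thesis
      using nsgrm_diag[OF Y s] by (simp add: lift_short)
  next
    case False
    then show ?thesis
      by (subst lift.simps) (cases w, auto)
  qed
qed

lemma diag_deriv_lift:
  assumes s: "s \<in> {0..T}"
  shows "diag_deriv T (lift T N Y) s = diag_deriv T Y s"
proof
  fix u
  have "((\<lambda>t. lift T N Y s t u) has_real_derivative conc (lift T N Y s s) (diag_deriv T Y s) u)
      (at s within {0..T})"
    by (rule lift_has_real_derivative[OF s s])
  then show "diag_deriv T (lift T N Y) s u = diag_deriv T Y s u"
    using diag_deriv_eqI[OF T s] by (simp add: lift_diag[OF s])
qed

lemma lift_chen:
  assumes s: "s \<in> {0..T}" and u: "u \<in> {0..T}" and t: "t \<in> {0..T}"
  shows "conc (lift T N Y s u) (lift T N Y u t) = lift T N Y s t"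
proof
  fix w
  have deriv: "((\<lambda>r. conc (lift T N Y s u) (lift T N Y u r) w) has_real_derivative
      conc (conc (lift T N Y s u) (lift T N Y u r)) (diag_deriv T Y r) w) (at r within {0..T})"
    if "r \<in> {0..T}" for r w
  proof -
    have "((\<lambda>r. conc (lift T N Y s u) (lift T N Y u r) w) has_real_derivative
        conc (lift T N Y s u) (conc (lift T N Y u r) (diag_deriv T Y r)) w) (at r within {0..T})"
      unfolding conc_def[of "lift T N Y s u"] using u that
      by (intro DERIV_sum DERIV_cmult lift_has_real_derivative)
    then show ?thesis
      by (simp add: conc_assoc)
  qed
  show "conc (lift T N Y s u) (lift T N Y u t) w = lift T N Y s t w"
  proof (rule conc_ode_unique[where K = "{}" and c = u and E = "diag_deriv T Y"
        and f = "\<lambda>r. conc (lift T N Y s u) (lift T N Y u r)" and g = "lift T N Y s"])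
    show "conc (lift T N Y s u) (lift T N Y u u) = lift T N Y s u"
      by (simp add: lift_diag[OF u])
    show "continuous_on {0..T} (\<lambda>r. conc (lift T N Y s u) (lift T N Y u r) w)" for w
      using deriv by (intro DERIV_continuous_on)
    show "continuous_on {0..T} (\<lambda>r. lift T N Y s r w)" for w
      using s smooth_on_lift by (intro smooth_on_imp_continuous_on)
  qed (use s u t deriv lift_has_real_derivative diag_deriv_Nil[OF T Y] in auto)
qed

lemma lift_shuffle:
  assumes s: "s \<in> {0..T}"
  shows "t \<in> {0..T} \<Longrightarrow> pair_shuffle (lift T N Y s t) v w = lift T N Y s t v * lift T N Y s t w"
proof (induction "length v + length w" arbitrary: v w t rule: less_induct)
  case less
  define X where "X = lift T N Y s"
  define D where "D = diag_deriv T Y"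
  have "((\<lambda>t. pair_shuffle (X t) v w - X t v * X t w) has_real_derivative 0) (at r within {0..T})"
    if r: "r \<in> {0..T}" for r
  proof -
    have "((\<lambda>t. pair_shuffle (X t) v w - X t v * X t w) has_real_derivative
        pair_shuffle (conc (X r) (D r)) v w - (conc (X r) (D r) v * X r w + conc (X r) (D r) w * X r v))
        (at r within {0..T})"
      unfolding X_def D_def using s r
      by (intro DERIV_diff DERIV_mult has_real_derivative_pair_shuffle lift_has_real_derivative)
    moreover have "pair_shuffle (conc (X r) (D r)) v w = conc (X r) (D r) v * X r w + conc (X r) (D r) w * X r v"
      unfolding X_def D_def using less r diag_deriv_Nil[OF T Y r] diag_deriv_primitive[OF T Y r]
      by (intro pair_shuffle_conc_primitive) auto
    ultimately show ?thesis
      by simp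
  qed
  then obtain c where c: "\<forall>r\<in>{0..T}. pair_shuffle (X r) v w - X r v * X r w = c"
    using has_field_derivative_zero_constant[OF convex_real_interval(5)] by blast
  moreover have "pair_shuffle (X s) v w - X s v * X s w = 0"
    unfolding X_def lift_diag[OF s] by (simp add: pair_shuffle_one_series)
  ultimately have "pair_shuffle (X t) v w - X t v * X t w = 0"
    using s less.prems by metis
  then show ?case
    unfolding X_def by simp
qed

lemma sgrm_lift: "sgrm T (lift T N Y)"
proof -
  have 0: "0 \<in> {0..T}"
    using T by simp
  then have "lift T N Y 0 0 [] \<noteq> 0"
    by (simp add: lift_diag)
  then show ?thesis
    unfolding sgrm_def using 0 lift_shuffle lift_chen smooth_on_lift by blast
qed

lemma minimal_extension_lift: "minimal_extension T N (lift T N Y) Y"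
  unfolding minimal_extension_def extension_def
  by (simp add: sgrm_lift lift_short diag_deriv_lift diag_deriv_in_lieN[OF T Y])

end

section \<open>Uniqueness and locality of the minimal extension\<close>

context
  fixes T :: real
  assumes T: "0 < T"
begin

lemma diag_deriv_local:
  assumes "r \<in> {0..T}" "r < t" "t \<le> T"
    and Z: "\<And>u. smooth_on {0..T} (\<lambda>t'. Z r t' u)" and Z': "\<And>u. smooth_on {0..T} (\<lambda>t'. Z' r t' u)"
    and eq: "\<And>t'. t' \<in> {r..t} \<Longrightarrow> Z r t' = Z' r t'"
  shows "diag_deriv T Z r = diag_deriv T Z' r"
proof
  fix u
  have sub: "{r..t} \<subseteq> {0..T}" and r: "r \<in> {r..t}"
    using assms(1-3) by auto
  have "((\<lambda>t'. Z r t' u) has_real_derivative diag_deriv T Z r u) (at r within {r..t})"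
    by (rule DERIV_subset[OF has_real_derivative_diag_deriv[where Z = Z, OF T \<open>r \<in> {0..T}\<close> Z] sub])
  then have "((\<lambda>t'. Z' r t' u) has_real_derivative diag_deriv T Z r u) (at r within {r..t})"
    by (rule has_real_derivative_transform[OF r, rotated]) (simp add: eq)
  moreover have "((\<lambda>t'. Z' r t' u) has_real_derivative diag_deriv T Z' r u) (at r within {r..t})"
    by (rule DERIV_subset[OF has_real_derivative_diag_deriv[where Z = Z', OF T \<open>r \<in> {0..T}\<close> Z'] sub])
  ultimately show "diag_deriv T Z r u = diag_deriv T Z' r u"
    by (rule has_real_derivative_interval_unique[OF \<open>r < t\<close> r])
qed

context
  fixes N :: nat and Y X :: "real \<Rightarrow> real \<Rightarrow> ('a::finite) series"
  assumes Y: "nsgrm T N Y" and X: "minimal_extension T N X Y"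
begin

lemma minimal_extension_sgrm: "sgrm T X"
  using X by (simp add: minimal_extension_def)

text \<open>Up to level \<open>N\<close> the two families coincide; above it the diagonal derivative of \<open>X\<close> vanishes,
  being the truncation of a Lie polynomial, and so does that of \<open>Y\<close>.\<close>

lemma minimal_extension_diag_deriv:
  assumes s: "s \<in> {0..T}"
  shows "diag_deriv T X s = diag_deriv T Y s"
proof
  fix u :: "'a list"
  show "diag_deriv T X s u = diag_deriv T Y s u"
  proof (cases "length u \<le> N")
    case True
    have "((\<lambda>t. Y s t u) has_real_derivative diag_deriv T Y s u) (at s within {0..T})"
      by (rule has_real_derivative_diag_deriv[where Z = Y, OF T s nsgrm_smooth[OF Y s]])
    then have "((\<lambda>t. X s t u) has_real_derivative diag_deriv T Y s u) (at s within {0..T})"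
      by (rule has_real_derivative_transform[OF s, rotated])
        (use X s True in \<open>auto simp: minimal_extension_def extension_def\<close>)
    then show ?thesis
      by (rule diag_deriv_eqI[OF T s])
  next
    case False
    obtain L where "diag_deriv T X s = proj N L"
      using X s unfolding minimal_extension_def lieN_def by blast
    then show ?thesis
      using False diag_deriv_long[OF T Y s] by (simp add: proj_def)
  qed
qed

lemma minimal_extension_has_real_derivative:
  "s \<in> {0..T} \<Longrightarrow> t \<in> {0..T} \<Longrightarrow>
    ((\<lambda>t. X s t w) has_real_derivative conc (X s t) (diag_deriv T Y t) w) (at t within {0..T})"
  using sgrm_has_real_derivative[OF T minimal_extension_sgrm] minimal_extension_diag_deriv by simp

end

lemma minimal_extension_unique:
  assumes Y: "nsgrm T N Y" and X: "minimal_extension T N X Y" and X': "minimal_extension T N X' Y"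
    and s: "s \<in> {0..T}" and t: "t \<in> {0..T}"
  shows "X s t = X' s t"
proof
  fix w
  have sgrm: "sgrm T X" "sgrm T X'"
    using X X' by (simp_all add: minimal_extension_def)
  show "X s t w = X' s t w"
  proof (rule conc_ode_unique[where S = "{0..T}" and K = "{}" and c = s and E = "diag_deriv T Y"
        and f = "X s" and g = "X' s"])
    show "continuous_on {0..T} (\<lambda>t. X s t w)" for w
      by (intro smooth_on_imp_continuous_on sgrm_smooth[OF sgrm(1) s])
    show "continuous_on {0..T} (\<lambda>t. X' s t w)" for w
      by (intro smooth_on_imp_continuous_on sgrm_smooth[OF sgrm(2) s])
    show "X s s = X' s s"
      using s by (simp add: sgrm_diag[OF sgrm(1)] sgrm_diag[OF sgrm(2)])
  qed (use s t minimal_extension_has_real_derivative[OF Y X s] minimal_extension_has_real_derivative[OF Y X' s]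
      diag_deriv_Nil[OF T Y] in auto)
qed

text \<open>On \<open>[s, t]\<close> both extensions solve the same equation, driven by diagonal derivatives that agree
  at every \<open>r < t\<close>; the right endpoint is the one exceptional point, where the derivative may see
  \<open>Y\<close> beyond \<open>t\<close>.\<close>

lemma minimal_extension_local:
  assumes Y: "nsgrm T N Y" and Y': "nsgrm T N Y'"
    and X: "minimal_extension T N X Y" and X': "minimal_extension T N X' Y'"
    and st: "0 \<le> s" "s \<le> t" "t \<le> T"
    and eq: "\<forall>a\<in>{s..t}. \<forall>b\<in>{s..t}. Y a b = Y' a b"
  shows "X s t = X' s t"
proof
  fix w
  have sgrm: "sgrm T X" "sgrm T X'"
    using X X' by (simp_all add: minimal_extension_def)
  have sub: "{s..t} \<subseteq> {0..T}" and s: "s \<in> {0..T}"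
    using st by auto
  have "diag_deriv T Y r = diag_deriv T Y' r" if "r \<in> {s..t} - {t}" for r
    using that st eq by (intro diag_deriv_local nsgrm_smooth[OF Y] nsgrm_smooth[OF Y']) auto
  then have deriv': "((\<lambda>t. X' s t w) has_real_derivative conc (X' s r) (diag_deriv T Y r) w) (at r within {s..t})"
    if "r \<in> {s..t} - {t}" for r w
    using that sub DERIV_subset[OF minimal_extension_has_real_derivative[OF Y' X' s, of r] sub] by auto
  show "X s t w = X' s t w"
  proof (rule conc_ode_unique[where S = "{s..t}" and K = "{t}" and c = s and E = "diag_deriv T Y"
        and f = "X s" and g = "X' s"])
    show "continuous_on {s..t} (\<lambda>t. X s t w)" for w
      by (rule continuous_on_subset[OF smooth_on_imp_continuous_on[OF sgrm_smooth[OF sgrm(1) s]] sub])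
    show "continuous_on {s..t} (\<lambda>t. X' s t w)" for w
      by (rule continuous_on_subset[OF smooth_on_imp_continuous_on[OF sgrm_smooth[OF sgrm(2) s]] sub])
    show "X s s = X' s s"
      using s by (simp add: sgrm_diag[OF sgrm(1)] sgrm_diag[OF sgrm(2)])
    show "((\<lambda>t. X s t w) has_real_derivative conc (X s r) (diag_deriv T Y r) w) (at r within {s..t})"
      if "r \<in> {s..t} - {t}" for r w
      using that sub DERIV_subset[OF minimal_extension_has_real_derivative[OF Y X s, of r] sub] by auto
  qed (use st sub deriv' diag_deriv_Nil[OF T Y] in auto)
qed

end

theorem theorem2p8:
  fixes T :: real and N :: nat and Y :: "real \<Rightarrow> real \<Rightarrow> ('a::finite) list \<Rightarrow> real"
  assumes "T > 0" and "nsgrm T N Y"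
  shows "(\<exists>X. minimal_extension T N X Y)
    \<and> (\<forall>X X'. minimal_extension T N X Y \<longrightarrow> minimal_extension T N X' Y \<longrightarrow>
          (\<forall>s\<in>{0..T}. \<forall>t\<in>{0..T}. X s t = X' s t))
    \<and> (\<forall>X. minimal_extension T N X Y \<longrightarrow>
          (\<forall>s\<in>{0..T}. diag_deriv T X s = diag_deriv T Y s))
    \<and> (\<forall>Y' X X' s t. nsgrm T N Y' \<longrightarrow> minimal_extension T N X Y \<longrightarrow>
          minimal_extension T N X' Y' \<longrightarrow> 0 \<le> s \<longrightarrow> s \<le> t \<longrightarrow> t \<le> T \<longrightarrow>
          (\<forall>u v. s \<le> u \<longrightarrow> u \<le> v \<longrightarrow> v \<le> t \<longrightarrow>
             (\<forall>a\<in>{u..v}. \<forall>b\<in>{u..v}. Y a b = Y' a b)) \<longrightarrow>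
          X s t = X' s t)"
proof (intro conjI allI impI ballI)
  show "\<exists>X. minimal_extension T N X Y"
    using minimal_extension_lift[OF assms] by blast
next
  fix X X' s t
  assume "minimal_extension T N X Y" "minimal_extension T N X' Y" "s \<in> {0..T}" "t \<in> {0..T}"
  then show "X s t = X' s t"
    by (rule minimal_extension_unique[OF assms])
next
  fix X s
  assume "minimal_extension T N X Y" "s \<in> {0..T}"
  then show "diag_deriv T X s = diag_deriv T Y s"
    by (rule minimal_extension_diag_deriv[OF assms])
next
  fix Y' X X' s t
  assume "nsgrm T N Y'" "minimal_extension T N X Y" "minimal_extension T N X' Y'"
    and st: "0 \<le> s" "s \<le> t" "t \<le> T"
    and "\<forall>u v. s \<le> u \<longrightarrow> u \<le> v \<longrightarrow> v \<le> t \<longrightarrow> (\<forall>a\<in>{u..v}. \<forall>b\<in>{u..v}. Y a b = Y' a b)"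
  then have "\<forall>a\<in>{s..t}. \<forall>b\<in>{s..t}. Y a b = Y' a b"
    by blast
  with \<open>nsgrm T N Y'\<close> \<open>minimal_extension T N X Y\<close> \<open>minimal_extension T N X' Y'\<close> st
  show "X s t = X' s t"
    by (rule minimal_extension_local[OF assms])
qed

end
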